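(* Let $B^n$ be the open unit ball of $\mathbb{R}^n$, let $f\colon[0,1)\to[0,\infty)$ with $f(0)=1$, and suppose $\rho_M(x,y)=\dfrac{|x-y|}{f(|x|)f(|y|)}$ is a metric on $B^n$. Then $\rho_M(g(x),g(y))=\rho_M(x,y)$ for all $x,y\in B^n$ and all $g\in GM(B^n)$ if and only if $f(x)=\sqrt{1-x^2}$ for all $x\in[0,1)$.
   Context: $GM(B^n)$ denotes the group of Möbius transformations of $\overline{\mathbb{R}^n}=\mathbb{R}^n\cup\{\infty\}$ mapping $B^n$ onto itself. Convention $0/0=0$. *)

theory Defs
  imports "HOL-Analysis.Analysis"
begin

text \<open>The one-point compactification of R^n is modelled as 'a option,
  with None standing for the point at infinity.\<close>

definition hyperplane_reflection :: "'a::euclidean_space \<Rightarrow> real \<Rightarrow> 'a option \<Rightarrow> 'a option" where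
  "hyperplane_reflection a t p =
     (case p of None \<Rightarrow> None
      | Some x \<Rightarrow> Some (x - (2 * (inner a x - t) / (norm a)\<^sup>2) *\<^sub>R a))"

definition sphere_inversion :: "'a::euclidean_space \<Rightarrow> real \<Rightarrow> 'a option \<Rightarrow> 'a option" where
  "sphere_inversion c r p =
     (case p of None \<Rightarrow> Some c
      | Some x \<Rightarrow> (if x = c then None
                   else Some (c + (r\<^sup>2 / (norm (x - c))\<^sup>2) *\<^sub>R (x - c))))"

inductive mobius :: "('a::euclidean_space option \<Rightarrow> 'a option) \<Rightarrow> bool" where
  mobius_id: "mobius id"
| mobius_refl: "mobius g \<Longrightarrow> a \<noteq> 0 \<Longrightarrow> mobius (hyperplane_reflection a t \<circ> g)"
| mobius_inv: "mobius g \<Longrightarrow> r > 0 \<Longrightarrow> mobius (sphere_inversion c r \<circ> g)"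

definition GM_ball :: "('a::euclidean_space option \<Rightarrow> 'a option) set" where
  "GM_ball = {g. mobius g \<and> g ` (Some ` ball 0 1) = Some ` ball (0::'a) 1}"

definition rho_M :: "(real \<Rightarrow> real) \<Rightarrow> 'a::real_normed_vector \<Rightarrow> 'a \<Rightarrow> real" where
  "rho_M f x y = norm (x - y) / (f (norm x) * f (norm y))"

definition is_metric_on :: "'a set \<Rightarrow> ('a \<Rightarrow> 'a \<Rightarrow> real) \<Rightarrow> bool" where
  "is_metric_on S d \<longleftrightarrow>
     (\<forall>x\<in>S. \<forall>y\<in>S. d x y \<ge> 0 \<and> (d x y = 0 \<longleftrightarrow> x = y) \<and> d x y = d y x) \<and>
     (\<forall>x\<in>S. \<forall>y\<in>S. \<forall>z\<in>S. d x z \<le> d x y + d y z)"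

end

theory Submission
  imports Defs
begin

(* Lift the extended space to the light cone of the Lorentz form
   B((x,a,b),(y,c,d)) = <x,y> - (ad + cb)/2 on R^n x R x R by x |-> (x, |x|^2, 1) and
   infinity |-> (0, 1, 0), so that B(x^, y^) = -|x - y|^2/2. A reflection in a hyperplane or an
   inversion in a sphere becomes a Lorentz reflection, up to positive rescaling of the lifted
   points; hence every Moebius map g is induced by a surjective linear Lorentz isometry M with
   M x^ = beta(x) (g x)^ and beta > 0. The vector S = (0, -1, 1) satisfies
   2 B(x^, S) = 1 - |x|^2, and it is the only vector with B(S, S) = 1 whose product with x^ is
   positive exactly on the ball. If g preserves the ball this characterises M^-1 S as well, so M
   fixes S, and then 1 - |x|^2 = beta(x) (1 - |g x|^2) and |x - y|^2 = beta(x) beta(y) |g x - g y|^2.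
   So |x - y|^2 / ((1 - |x|^2)(1 - |y|^2)), the square of rho_M for f(t) = sqrt(1 - t^2), is
   invariant.
   Conversely, with s = 2 tau/(1 + tau^2), the inversion in the sphere centred at e/tau and
   orthogonal to the unit sphere maps tau e to 0 and s e to -tau e; invariance of rho_M on these
   two pairs forces f(s) = (1 - tau^2)/(1 + tau^2) = sqrt(1 - s^2). *)

definition lorentz :: "'a::euclidean_space \<times> real \<times> real \<Rightarrow> 'a \<times> real \<times> real \<Rightarrow> real" where
  "lorentz u v = inner (fst u) (fst v) - (fst (snd u) * snd (snd v) + fst (snd v) * snd (snd u)) / 2"

lemma lorentz_Pair [simp]: "lorentz (x, a, b) (y, c, d) = inner x y - (a * d + c * b) / 2"
  by (simp add: lorentz_def)

lemma lorentz_commute: "lorentz u v = lorentz v u"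
  by (simp add: lorentz_def inner_commute algebra_simps)

lemma lorentz_add_left: "lorentz (u + v) w = lorentz u w + lorentz v w"
  by (simp add: lorentz_def inner_add_left field_simps)

lemma lorentz_diff_left: "lorentz (u - v) w = lorentz u w - lorentz v w"
  by (simp add: lorentz_def inner_diff_left field_simps)

lemma lorentz_scaleR_left: "lorentz (s *\<^sub>R u) w = s * lorentz u w"
  by (simp add: lorentz_def algebra_simps)

lemma lorentz_diff_right: "lorentz w (u - v) = lorentz w u - lorentz w v"
  using lorentz_diff_left lorentz_commute by metis

lemma lorentz_scaleR_right: "lorentz w (s *\<^sub>R u) = s * lorentz w u"
  using lorentz_scaleR_left lorentz_commute by metis

definition lorentz_lift :: "'a::euclidean_space option \<Rightarrow> 'a \<times> real \<times> real" where
  "lorentz_lift p = (case p of None \<Rightarrow> (0, 1, 0) | Some x \<Rightarrow> (x, (norm x)\<^sup>2, 1))"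

lemma lorentz_lift_simps [simp]:
  "lorentz_lift None = (0, 1, 0)"
  "lorentz_lift (Some x) = (x, (norm x)\<^sup>2, 1)"
  by (simp_all add: lorentz_lift_def)

lemma lorentz_lift_Some_Some: "lorentz (lorentz_lift (Some x)) (lorentz_lift (Some y)) = - (norm (x - y))\<^sup>2 / 2"
  by (simp add: power2_norm_eq_inner inner_diff_left inner_diff_right inner_commute algebra_simps)

lemma lorentz_lift_eq_0_iff: "lorentz (lorentz_lift p) (lorentz_lift q) = 0 \<longleftrightarrow> p = q"
proof (cases p; cases q)
  fix x y assume "p = Some x" "q = Some y"
  then show ?thesis by (simp only: lorentz_lift_Some_Some) simp
qed auto

lemma lorentz_lift_Some_ball_normal:
  "2 * lorentz (lorentz_lift (Some x)) (0, -1, 1) = 1 - (norm x)\<^sup>2"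
  by (simp add: field_simps)

definition lorentz_reflect ::
    "'a::euclidean_space \<times> real \<times> real \<Rightarrow> 'a \<times> real \<times> real \<Rightarrow> 'a \<times> real \<times> real" where
  "lorentz_reflect h v = v - (2 * lorentz v h / lorentz h h) *\<^sub>R h"

lemma lorentz_reflect_orthogonal:
  assumes "lorentz h h \<noteq> 0"
  shows "lorentz (lorentz_reflect h v) h = - lorentz v h"
  using assms by (simp add: lorentz_reflect_def lorentz_diff_left lorentz_scaleR_left)

lemma lorentz_reflect_isometry:
  assumes "lorentz h h \<noteq> 0"
  shows "lorentz (lorentz_reflect h u) (lorentz_reflect h v) = lorentz u v"
proof -
  have "lorentz h (lorentz_reflect h v) = - lorentz v h"
    by (simp only: lorentz_commute[of h] lorentz_reflect_orthogonal[OF assms])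
  moreover have "lorentz u (lorentz_reflect h v) = lorentz u v - (2 * lorentz v h / lorentz h h) * lorentz u h"
    by (simp add: lorentz_reflect_def lorentz_diff_right lorentz_scaleR_right)
  ultimately show ?thesis
    by (simp add: lorentz_reflect_def lorentz_diff_left lorentz_scaleR_left)
qed

lemma lorentz_reflect_involutive:
  assumes "lorentz h h \<noteq> 0"
  shows "lorentz_reflect h (lorentz_reflect h v) = v"
proof -
  have "lorentz_reflect h (lorentz_reflect h v) = lorentz_reflect h v + (2 * lorentz v h / lorentz h h) *\<^sub>R h"
    unfolding lorentz_reflect_def[of h "lorentz_reflect h v"] lorentz_reflect_orthogonal[OF assms] by simp
  also have "\<dots> = v"
    by (simp add: lorentz_reflect_def)
  finally show ?thesis .
qed

lemma linear_lorentz_reflect: "linear (lorentz_reflect h)"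
  by (rule linearI) (simp_all add: lorentz_reflect_def lorentz_add_left lorentz_scaleR_left add_divide_distrib
      scaleR_add_left algebra_simps)

definition lorentz_isometry :: "('a::euclidean_space \<times> real \<times> real \<Rightarrow> 'a \<times> real \<times> real) \<Rightarrow> bool" where
  "lorentz_isometry M \<longleftrightarrow> linear M \<and> surj M \<and> (\<forall>u v. lorentz (M u) (M v) = lorentz u v)"

lemma lorentz_isometry_id: "lorentz_isometry id"
  unfolding lorentz_isometry_def by (auto intro: linearI)

lemma lorentz_isometry_comp:
  assumes "lorentz_isometry M" "lorentz_isometry N"
  shows "lorentz_isometry (N \<circ> M)"
  using assms comp_surj[of M N] linear_compose[of M N] unfolding lorentz_isometry_def
  by (simp del: lorentz_Pair split_paired_All)

lemma lorentz_isometry_reflect: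
  assumes "lorentz h h \<noteq> 0"
  shows "lorentz_isometry (lorentz_reflect h)"
  unfolding lorentz_isometry_def
  using linear_lorentz_reflect surjI[of "lorentz_reflect h", OF lorentz_reflect_involutive[OF assms]]
    lorentz_reflect_isometry[OF assms] by blast

definition lorentz_representable :: "('a::euclidean_space option \<Rightarrow> 'a option) \<Rightarrow> bool" where
  "lorentz_representable g \<longleftrightarrow>
     (\<exists>M. lorentz_isometry M \<and> (\<forall>p. \<exists>\<beta>>0. M (lorentz_lift p) = \<beta> *\<^sub>R lorentz_lift (g p)))"

lemma lorentz_representable_id: "lorentz_representable id"
  unfolding lorentz_representable_def
  by (intro exI[of _ id] conjI allI exI[of _ 1]) (simp_all add: lorentz_isometry_id)

lemma lorentz_representable_comp:
  assumes "lorentz_representable G" "lorentz_representable g"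
  shows "lorentz_representable (G \<circ> g)"
proof -
  obtain N where N: "lorentz_isometry N" "\<And>p. \<exists>\<gamma>>0. N (lorentz_lift p) = \<gamma> *\<^sub>R lorentz_lift (G p)"
    using assms(1) unfolding lorentz_representable_def by blast
  obtain M where M: "lorentz_isometry M" "\<And>p. \<exists>\<beta>>0. M (lorentz_lift p) = \<beta> *\<^sub>R lorentz_lift (g p)"
    using assms(2) unfolding lorentz_representable_def by blast
  have "\<exists>\<delta>>0. (N \<circ> M) (lorentz_lift p) = \<delta> *\<^sub>R lorentz_lift ((G \<circ> g) p)" for p
  proof -
    obtain \<beta> where \<beta>: "\<beta> > 0" "M (lorentz_lift p) = \<beta> *\<^sub>R lorentz_lift (g p)"
      using M(2) by blast
    obtain \<gamma> where \<gamma>: "\<gamma> > 0" "N (lorentz_lift (g p)) = \<gamma> *\<^sub>R lorentz_lift (G (g p))"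
      using N(2) by blast
    have "(N \<circ> M) (lorentz_lift p) = (\<beta> * \<gamma>) *\<^sub>R lorentz_lift ((G \<circ> g) p)"
      using N(1) \<beta>(2) \<gamma>(2) by (simp add: lorentz_isometry_def linear_scale)
    moreover have "\<beta> * \<gamma> > 0" using \<beta>(1) \<gamma>(1) by simp
    ultimately show ?thesis by blast
  qed
  then show ?thesis
    using lorentz_isometry_comp[OF M(1) N(1)] unfolding lorentz_representable_def by blast
qed

lemma lorentz_reflect_lift_hyperplane_reflection:
  assumes "a \<noteq> 0"
  shows "lorentz_reflect (a, 2 * t, 0) (lorentz_lift q) = lorentz_lift (hyperplane_reflection a t q)"
proof (cases q)
  case None
  then show ?thesis by (simp add: lorentz_reflect_def hyperplane_reflection_def)
next
  case (Some x)
  define k where "k = 2 * (inner a x - t) / (norm a)\<^sup>2"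
  have ka: "k * (norm a)\<^sup>2 = 2 * (inner a x - t)"
    using assms by (simp add: k_def)
  have "(norm (x - k *\<^sub>R a))\<^sup>2 = (norm x)\<^sup>2 - 2 * k * inner a x + k * (2 * (inner a x - t))"
    unfolding ka[symmetric]
    by (simp add: power2_norm_eq_inner inner_diff_left inner_diff_right inner_commute algebra_simps)
  then have "(norm (x - k *\<^sub>R a))\<^sup>2 = (norm x)\<^sup>2 - k * (2 * t)"
    by (simp add: algebra_simps)
  moreover have "2 * lorentz (lorentz_lift q) (a, 2 * t, 0) / lorentz (a, 2 * t, 0) (a, 2 * t, 0) = k"
    by (simp add: Some k_def power2_norm_eq_inner inner_commute)
  ultimately have "lorentz_reflect (a, 2 * t, 0) (lorentz_lift q) = lorentz_lift (Some (x - k *\<^sub>R a))"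
    by (simp add: lorentz_reflect_def Some del: lorentz_Pair)
  moreover have "hyperplane_reflection a t q = Some (x - k *\<^sub>R a)"
    by (simp add: Some hyperplane_reflection_def k_def)
  ultimately show ?thesis by simp
qed

lemma lorentz_representable_hyperplane_reflection:
  assumes "a \<noteq> 0"
  shows "lorentz_representable (hyperplane_reflection a t)"
proof -
  have "lorentz (a, 2 * t, 0) (a, 2 * t, 0) \<noteq> 0"
    using assms by (simp add: power2_norm_eq_inner[symmetric])
  then show ?thesis
    unfolding lorentz_representable_def
    by (intro exI[of _ "lorentz_reflect (a, 2 * t, 0)"] conjI allI exI[of _ 1])
      (simp_all add: lorentz_isometry_reflect lorentz_reflect_lift_hyperplane_reflection[OF assms])
qed

lemma lorentz_sphere_vector_self:
  "lorentz (c, (norm c)\<^sup>2 - r\<^sup>2, 1) (c, (norm c)\<^sup>2 - r\<^sup>2, 1) = r\<^sup>2"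
  by (simp add: power2_norm_eq_inner field_simps)

lemma lorentz_reflect_lift_sphere_inversion_Some:
  fixes c x :: "'a::euclidean_space"
  assumes "r > 0" "x \<noteq> c"
  shows "lorentz_reflect (c, (norm c)\<^sup>2 - r\<^sup>2, 1) (lorentz_lift (Some x))
       = ((norm (x - c))\<^sup>2 / r\<^sup>2) *\<^sub>R lorentz_lift (sphere_inversion c r (Some x))"
proof -
  define h where "h = (c, (norm c)\<^sup>2 - r\<^sup>2, 1::real)"
  define e where "e = x - c"
  define d where "d = (norm e)\<^sup>2"
  define y where "y = c + (r\<^sup>2 / d) *\<^sub>R e"
  have "d > 0" using assms(2) by (simp add: d_def e_def)
  have x: "x = c + e" by (simp add: e_def)
  have "lorentz (lorentz_lift (Some x)) h = (r\<^sup>2 - d) / 2"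
    by (simp add: h_def x d_def power2_norm_eq_inner inner_add_left inner_add_right inner_commute field_simps)
  then have reflect_x: "lorentz_reflect h (lorentz_lift (Some x)) = lorentz_lift (Some x) - (1 - d / r\<^sup>2) *\<^sub>R h"
    using assms(1) by (simp add: lorentz_reflect_def lorentz_sphere_vector_self h_def diff_divide_distrib del: lorentz_Pair)
  have "x - (1 - d / r\<^sup>2) *\<^sub>R c = (d / r\<^sup>2) *\<^sub>R y"
    using assms(1) \<open>d > 0\<close> by (simp add: x y_def algebra_simps)
  moreover have "(norm x)\<^sup>2 - (1 - d / r\<^sup>2) * ((norm c)\<^sup>2 - r\<^sup>2) = (d / r\<^sup>2) * (norm y)\<^sup>2"
  proof -
    have norm_c_plus: "(norm (c + k *\<^sub>R e))\<^sup>2 = (norm c)\<^sup>2 + 2 * k * inner c e + k\<^sup>2 * d" for k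
      unfolding d_def power2_norm_eq_inner
      by (simp add: inner_add_left inner_add_right inner_commute power2_eq_square algebra_simps)
    have "(norm x)\<^sup>2 = (norm c)\<^sup>2 + 2 * inner c e + d"
      using norm_c_plus[of 1] by (simp add: x)
    moreover have "(norm y)\<^sup>2 = (norm c)\<^sup>2 + 2 * (r\<^sup>2 / d) * inner c e + (r\<^sup>2 / d)\<^sup>2 * d"
      unfolding y_def by (rule norm_c_plus)
    ultimately show ?thesis
      using assms(1) \<open>d > 0\<close> by (simp add: field_simps power2_eq_square)
  qed
  ultimately have "lorentz_reflect h (lorentz_lift (Some x)) = (d / r\<^sup>2) *\<^sub>R lorentz_lift (Some y)"
    unfolding reflect_x by (simp add: h_def del: lorentz_Pair)
  moreover have "sphere_inversion c r (Some x) = Some y"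
    using assms(2) by (simp add: sphere_inversion_def y_def d_def e_def)
  ultimately show ?thesis
    by (simp add: h_def d_def e_def)
qed

lemma lorentz_reflect_lift_sphere_inversion:
  fixes c :: "'a::euclidean_space"
  assumes "r > 0"
  shows "\<exists>\<gamma>>0. lorentz_reflect (c, (norm c)\<^sup>2 - r\<^sup>2, 1) (lorentz_lift q) = \<gamma> *\<^sub>R lorentz_lift (sphere_inversion c r q)"
proof -
  have reflect: "lorentz_reflect (c, (norm c)\<^sup>2 - r\<^sup>2, 1) v
      = v - (2 * lorentz v (c, (norm c)\<^sup>2 - r\<^sup>2, 1) / r\<^sup>2) *\<^sub>R (c, (norm c)\<^sup>2 - r\<^sup>2, 1)" for v
    by (simp only: lorentz_reflect_def lorentz_sphere_vector_self)
  consider "q = None" | "q = Some c" | x where "q = Some x" "x \<noteq> c"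
    by (cases q) auto
  then show ?thesis
  proof cases
    case 1
    have "lorentz_reflect (c, (norm c)\<^sup>2 - r\<^sup>2, 1) (lorentz_lift q) = (1 / r\<^sup>2) *\<^sub>R lorentz_lift (sphere_inversion c r q)"
      using assms 1 unfolding reflect by (simp add: sphere_inversion_def field_simps)
    moreover have "1 / r\<^sup>2 > 0" using assms by simp
    ultimately show ?thesis by blast
  next
    case 2
    have "lorentz_reflect (c, (norm c)\<^sup>2 - r\<^sup>2, 1) (lorentz_lift q) = r\<^sup>2 *\<^sub>R lorentz_lift (sphere_inversion c r q)"
      using assms 2 unfolding reflect by (simp add: sphere_inversion_def power2_norm_eq_inner field_simps)
    moreover have "r\<^sup>2 > 0" using assms by simp
    ultimately show ?thesis by blast
  next
    case 3
    moreover have "(norm (x - c))\<^sup>2 / r\<^sup>2 > 0" using assms 3 by simp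
    ultimately show ?thesis
      using lorentz_reflect_lift_sphere_inversion_Some[OF assms] by blast
  qed
qed

lemma lorentz_representable_sphere_inversion:
  assumes "r > 0"
  shows "lorentz_representable (sphere_inversion c r)"
proof -
  have "lorentz (c, (norm c)\<^sup>2 - r\<^sup>2, 1) (c, (norm c)\<^sup>2 - r\<^sup>2, 1) \<noteq> 0"
    using assms by (simp only: lorentz_sphere_vector_self) simp
  then show ?thesis
    unfolding lorentz_representable_def
    using lorentz_isometry_reflect lorentz_reflect_lift_sphere_inversion[OF assms] by blast
qed

lemma mobius_imp_lorentz_representable: "mobius g \<Longrightarrow> lorentz_representable g"
  by (induction rule: mobius.induct)
    (blast intro: lorentz_representable_comp lorentz_representable_id
      lorentz_representable_hyperplane_reflection lorentz_representable_sphere_inversion)+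

lemma lorentz_representable_inj:
  assumes "lorentz_representable g"
  shows "inj g"
proof (rule injI)
  fix p q assume "g p = g q"
  obtain M where M: "lorentz_isometry M" "\<And>p. \<exists>\<beta>>0. M (lorentz_lift p) = \<beta> *\<^sub>R lorentz_lift (g p)"
    using assms unfolding lorentz_representable_def by blast
  obtain \<beta> \<gamma> where "\<beta> > 0" "M (lorentz_lift p) = \<beta> *\<^sub>R lorentz_lift (g p)"
    "\<gamma> > 0" "M (lorentz_lift q) = \<gamma> *\<^sub>R lorentz_lift (g q)"
    using M(2) by meson
  then have "lorentz (lorentz_lift p) (lorentz_lift q) = \<beta> * \<gamma> * lorentz (lorentz_lift (g p)) (lorentz_lift (g q))"
    using M(1) unfolding lorentz_isometry_def
    by (metis lorentz_scaleR_left lorentz_scaleR_right mult.assoc)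
  then show "p = q"
    using \<open>g p = g q\<close> lorentz_lift_eq_0_iff by (metis mult_zero_right)
qed

lemma lorentz_lift_ball_normal_pos_iff:
  "lorentz (lorentz_lift p) (0, -1, 1) > 0 \<longleftrightarrow> p \<in> Some ` ball 0 1"
proof (cases p)
  case (Some x)
  have "(norm x)\<^sup>2 < 1 \<longleftrightarrow> norm x < 1"
    by (simp add: power_less_one_iff)
  then show ?thesis
    using lorentz_lift_Some_ball_normal[of x] by (auto simp: Some simp del: lorentz_Pair lorentz_lift_simps)
qed simp

lemma lorentz_ball_normal_unique:
  fixes w :: "'a::euclidean_space \<times> real \<times> real"
  assumes pos_iff: "\<And>z. lorentz (lorentz_lift (Some z)) w > 0 \<longleftrightarrow> norm z < 1"
    and "lorentz w w = 1"
  shows "w = (0, -1, 1)"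
proof -
  obtain a b c where w: "w = (a, b, c)"
    by (metis prod.exhaust)
  define \<phi> where "\<phi> z = inner z a - ((norm z)\<^sup>2 * c + b) / 2" for z :: 'a
  have \<phi>_pos_iff: "\<phi> z > 0 \<longleftrightarrow> norm z < 1" for z
    using pos_iff[of z] by (simp add: w \<phi>_def inner_commute)
  have \<phi>_sphere: "\<phi> e = 0" if "norm e = 1" for e
  proof -
    have "continuous_on (closure (ball 0 1)) \<phi>"
      unfolding \<phi>_def by (intro continuous_intros) simp
    then have "\<phi> e \<ge> 0"
      by (rule continuous_ge_on_closure) (use that \<phi>_pos_iff in \<open>auto intro: less_imp_le\<close>)
    moreover have "\<not> \<phi> e > 0"
      using that \<phi>_pos_iff by simp
    ultimately show ?thesis by simp
  qed
  have "a = 0"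
  proof (rule ccontr)
    assume "a \<noteq> 0"
    define e where "e = (1 / norm a) *\<^sub>R a"
    have "norm e = 1" "norm (- e) = 1" "inner e a = norm a"
      using \<open>a \<noteq> 0\<close> by (simp_all add: e_def dot_square_norm power2_eq_square)
    then have "2 * norm a = c + b" "- 2 * norm a = c + b"
      using \<phi>_sphere[of e] \<phi>_sphere[of "- e"] by (simp_all add: \<phi>_def)
    then have "norm a = 0" by linarith
    with \<open>a \<noteq> 0\<close> show False by simp
  qed
  obtain e :: 'a where "norm e = 1"
    using vector_choose_size[of 1] by auto
  then have "c = - b"
    using \<phi>_sphere[of e] \<open>a = 0\<close> by (simp add: \<phi>_def)
  have "b < 0"
    using \<phi>_pos_iff[of 0] by (simp add: \<phi>_def)
  moreover have "b\<^sup>2 = 1"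
    using \<open>lorentz w w = 1\<close> by (simp add: w \<open>a = 0\<close> \<open>c = - b\<close> power2_eq_square)
  ultimately have "b = -1"
    by (auto simp: power2_eq_1_iff)
  with \<open>a = 0\<close> \<open>c = - b\<close> show ?thesis by (simp add: w)
qed

lemma ball_preserving_lorentz_isometry_fixes_normal:
  fixes g :: "'a::euclidean_space option \<Rightarrow> 'a option"
  assumes M: "lorentz_isometry M" "\<And>p. \<exists>\<beta>>0. M (lorentz_lift p) = \<beta> *\<^sub>R lorentz_lift (g p)"
    and ball: "g ` (Some ` ball 0 1) = Some ` ball 0 1"
  shows "M (0, -1, 1) = (0, -1, 1)"
proof -
  have "inj g"
    using M lorentz_representable_inj unfolding lorentz_representable_def by blast
  obtain u where u: "M u = (0, -1, 1)"
    using M(1) unfolding lorentz_isometry_def by (metis surjD)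
  have isometry: "lorentz (M v) (M w) = lorentz v w" for v w
    using M(1) unfolding lorentz_isometry_def by blast
  have "lorentz (lorentz_lift (Some z)) u > 0 \<longleftrightarrow> norm z < 1" for z
  proof -
    obtain \<beta> where \<beta>: "\<beta> > 0" "M (lorentz_lift (Some z)) = \<beta> *\<^sub>R lorentz_lift (g (Some z))"
      using M(2) by blast
    have "lorentz (lorentz_lift (Some z)) u = \<beta> * lorentz (lorentz_lift (g (Some z))) (0, -1, 1)"
      using isometry[of "lorentz_lift (Some z)" u] by (simp only: \<beta>(2) u lorentz_scaleR_left)
    also have "\<dots> > 0 \<longleftrightarrow> g (Some z) \<in> g ` (Some ` ball 0 1)"
      using \<beta>(1) by (simp add: zero_less_mult_iff ball lorentz_lift_ball_normal_pos_iff del: lorentz_Pair)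
    also have "\<dots> \<longleftrightarrow> norm z < 1"
      using \<open>inj g\<close> by (simp add: inj_image_mem_iff)
    finally show ?thesis .
  qed
  moreover have "lorentz u u = 1"
    using isometry[of u u] by (simp add: u)
  ultimately have "u = (0, -1, 1)"
    by (rule lorentz_ball_normal_unique)
  with u show ?thesis by simp
qed

lemma ball_preserving_lorentz_representable_invariant:
  fixes g :: "'a::euclidean_space option \<Rightarrow> 'a option"
  assumes "lorentz_representable g" "g ` (Some ` ball 0 1) = Some ` ball 0 1"
    and gx: "g (Some x) = Some x'" and gy: "g (Some y) = Some y'"
  shows "(norm (x' - y'))\<^sup>2 / ((1 - (norm x')\<^sup>2) * (1 - (norm y')\<^sup>2))
       = (norm (x - y))\<^sup>2 / ((1 - (norm x)\<^sup>2) * (1 - (norm y)\<^sup>2))"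
proof -
  obtain M where M: "lorentz_isometry M" "\<And>p. \<exists>\<beta>>0. M (lorentz_lift p) = \<beta> *\<^sub>R lorentz_lift (g p)"
    using assms(1) unfolding lorentz_representable_def by blast
  have isometry: "lorentz (M v) (M w) = lorentz v w" for v w
    using M(1) unfolding lorentz_isometry_def by blast
  have fixes_normal: "M (0, -1, 1) = (0, -1, 1)"
    using ball_preserving_lorentz_isometry_fixes_normal[OF M assms(2)] .
  obtain \<beta> \<gamma> where "\<beta> > 0" "\<gamma> > 0"
    and \<beta>: "M (lorentz_lift (Some x)) = \<beta> *\<^sub>R lorentz_lift (Some x')"
    and \<gamma>: "M (lorentz_lift (Some y)) = \<gamma> *\<^sub>R lorentz_lift (Some y')"
    using M(2)[of "Some x"] M(2)[of "Some y"] gx gy by auto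
  have normal_scaling: "1 - (norm z)\<^sup>2 = \<delta> * (1 - (norm z')\<^sup>2)"
    if "M (lorentz_lift (Some z)) = \<delta> *\<^sub>R lorentz_lift (Some z')" for z z' \<delta>
  proof -
    have "1 - (norm z)\<^sup>2 = 2 * lorentz (M (lorentz_lift (Some z))) (M (0, -1, 1))"
      by (simp only: isometry lorentz_lift_Some_ball_normal)
    also have "\<dots> = \<delta> * (2 * lorentz (lorentz_lift (Some z')) (0, -1, 1))"
      by (simp only: that fixes_normal lorentz_scaleR_left mult.left_commute)
    finally show ?thesis
      by (simp only: lorentz_lift_Some_ball_normal)
  qed
  have "1 - (norm x)\<^sup>2 = \<beta> * (1 - (norm x')\<^sup>2)" "1 - (norm y)\<^sup>2 = \<gamma> * (1 - (norm y')\<^sup>2)"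
    using normal_scaling \<beta> \<gamma> by blast+
  moreover have "(norm (x - y))\<^sup>2 = \<beta> * \<gamma> * (norm (x' - y'))\<^sup>2"
    using isometry[of "lorentz_lift (Some x)" "lorentz_lift (Some y)"]
    by (simp only: \<beta> \<gamma> lorentz_scaleR_left lorentz_scaleR_right lorentz_lift_Some_Some)
      (simp add: algebra_simps)
  ultimately show ?thesis
    using \<open>\<beta> > 0\<close> \<open>\<gamma> > 0\<close> by simp
qed

lemma sphere_inversion_Some:
  "x \<noteq> c \<Longrightarrow> sphere_inversion c r (Some x) = Some (c + (r\<^sup>2 / (norm (x - c))\<^sup>2) *\<^sub>R (x - c))"
  by (simp add: sphere_inversion_def)

lemma sphere_inversion_involutive:
  assumes "r > 0"
  shows "sphere_inversion c r (sphere_inversion c r p) = p"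
proof -
  have "sphere_inversion c r (sphere_inversion c r (Some x)) = Some x" if "x \<noteq> c" for x
  proof -
    define k where "k = r\<^sup>2 / (norm (x - c))\<^sup>2"
    have "k > 0" using assms that by (simp add: k_def)
    have "k * (norm (x - c))\<^sup>2 = r\<^sup>2"
      using that by (simp add: k_def)
    have "(norm (k *\<^sub>R (x - c)))\<^sup>2 = k * (k * (norm (x - c))\<^sup>2)"
      using \<open>k > 0\<close> by (simp add: power_mult_distrib power2_eq_square)
    then have "(norm (k *\<^sub>R (x - c)))\<^sup>2 = k * r\<^sup>2"
      by (simp only: \<open>k * (norm (x - c))\<^sup>2 = r\<^sup>2\<close>)
    then have "r\<^sup>2 / (norm (k *\<^sub>R (x - c)))\<^sup>2 * k = 1"
      using assms \<open>k > 0\<close> by simp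
    then show ?thesis
      using assms \<open>k > 0\<close> that by (simp add: sphere_inversion_Some k_def[symmetric])
  qed
  then show ?thesis
    by (cases p) (auto simp: sphere_inversion_def)
qed

lemma norm_sphere_inversion_orthogonal:
  fixes c x :: "'a::euclidean_space"
  assumes "(norm c)\<^sup>2 = 1 + r\<^sup>2" "x \<noteq> c"
  shows "(norm (c + (r\<^sup>2 / (norm (x - c))\<^sup>2) *\<^sub>R (x - c)))\<^sup>2 - 1 = (r\<^sup>2 / (norm (x - c))\<^sup>2) * ((norm x)\<^sup>2 - 1)"
proof -
  define k where "k = r\<^sup>2 / (norm (x - c))\<^sup>2"
  have kd: "k * (norm (x - c))\<^sup>2 = r\<^sup>2"
    using assms(2) by (simp add: k_def)
  have "(norm (c + k *\<^sub>R (x - c)))\<^sup>2 = (norm c)\<^sup>2 + 2 * k * inner c (x - c) + k * (k * (norm (x - c))\<^sup>2)"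
    unfolding power2_norm_eq_inner by (simp add: inner_add_left inner_add_right inner_commute algebra_simps)
  also have "\<dots> = 1 + k * ((norm x)\<^sup>2 - 1)"
    using kd assms(1)
    by (simp add: power2_norm_eq_inner inner_diff_left inner_diff_right inner_commute algebra_simps)
  finally show ?thesis by (simp add: k_def)
qed

lemma sphere_inversion_orthogonal_ball:
  fixes c :: "'a::euclidean_space"
  assumes "r > 0" "(norm c)\<^sup>2 = 1 + r\<^sup>2"
  shows "sphere_inversion c r ` (Some ` ball 0 1) = Some ` ball 0 1"
proof -
  have into: "sphere_inversion c r (Some x) \<in> Some ` ball 0 1" if "norm x < 1" for x
  proof -
    have "1\<^sup>2 < (norm c)\<^sup>2"
      using assms by simp
    then have "norm c > 1"
      by (rule power2_less_imp_less) simp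
    then have "x \<noteq> c" using that by auto
    have "r\<^sup>2 / (norm (x - c))\<^sup>2 > 0"
      using assms(1) \<open>x \<noteq> c\<close> by simp
    moreover have "(norm x)\<^sup>2 - 1 < 0"
      using that by (simp add: power_less_one_iff)
    ultimately have "(r\<^sup>2 / (norm (x - c))\<^sup>2) * ((norm x)\<^sup>2 - 1) < 0"
      by (rule mult_pos_neg)
    then have "(norm (c + (r\<^sup>2 / (norm (x - c))\<^sup>2) *\<^sub>R (x - c)))\<^sup>2 < 1"
      using norm_sphere_inversion_orthogonal[OF assms(2) \<open>x \<noteq> c\<close>] by linarith
    then show ?thesis
      using \<open>x \<noteq> c\<close> by (simp add: sphere_inversion_Some power_less_one_iff)
  qed
  show ?thesis
  proof
    show "sphere_inversion c r ` Some ` ball 0 1 \<subseteq> Some ` ball 0 1"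
      using into by auto
    show "Some ` ball 0 1 \<subseteq> sphere_inversion c r ` Some ` ball 0 1"
    proof
      fix p assume "p \<in> Some ` ball (0::'a) 1"
      then have "sphere_inversion c r p \<in> Some ` ball 0 1"
        using into by auto
      then show "p \<in> sphere_inversion c r ` Some ` ball 0 1"
        using sphere_inversion_involutive[OF assms(1), of c p] by (metis image_eqI)
    qed
  qed
qed

lemma sphere_inversion_orthogonal_GM_ball:
  fixes c :: "'a::euclidean_space"
  assumes "r > 0" "(norm c)\<^sup>2 = 1 + r\<^sup>2"
  shows "sphere_inversion c r \<in> GM_ball"
proof -
  have "mobius (sphere_inversion c r \<circ> id)"
    by (rule mobius_inv[OF mobius_id assms(1)])
  then show ?thesis
    using sphere_inversion_orthogonal_ball[OF assms] by (simp add: GM_ball_def)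
qed

lemma sphere_inversion_on_line:
  fixes e :: "'a::euclidean_space"
  assumes "norm e = 1" "u \<noteq> a"
  shows "sphere_inversion (a *\<^sub>R e) r (Some (u *\<^sub>R e)) = Some ((a + r\<^sup>2 / (u - a)) *\<^sub>R e)"
proof -
  have "u *\<^sub>R e - a *\<^sub>R e = (u - a) *\<^sub>R e"
    by (simp add: scaleR_diff_left)
  moreover have "u *\<^sub>R e \<noteq> a *\<^sub>R e"
    using assms by (metis norm_zero scaleR_cancel_right zero_neq_one)
  ultimately show ?thesis
    using assms by (simp add: sphere_inversion_Some power2_eq_square scaleR_add_left)
qed

lemma ex_tangent_half_param:
  fixes s :: real
  assumes "0 < s" "s < 1"
  obtains \<tau> where "0 < \<tau>" "\<tau> < 1" "s = 2 * \<tau> / (1 + \<tau>\<^sup>2)"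
proof
  define p where "p = 1 + sqrt (1 - s\<^sup>2)"
  have "s\<^sup>2 < 1" using assms by (simp add: power_less_one_iff)
  then have "(p - 1)\<^sup>2 = 1 - s\<^sup>2" "p > 1"
    by (simp_all add: p_def)
  show "0 < s / p" "s / p < 1"
    using assms \<open>p > 1\<close> by simp_all
  have "1 + (s / p)\<^sup>2 = (p\<^sup>2 + s\<^sup>2) / p\<^sup>2"
    using \<open>p > 1\<close> by (simp add: power_divide add_divide_distrib)
  also have "\<dots> = 2 * p / p\<^sup>2"
    using \<open>(p - 1)\<^sup>2 = 1 - s\<^sup>2\<close> by (simp add: power2_eq_square algebra_simps)
  also have "\<dots> = 2 / p"
    by (simp add: power2_eq_square)
  finally show "s = 2 * (s / p) / (1 + (s / p)\<^sup>2)"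
    using \<open>p > 1\<close> by simp
qed

lemma sqrt_one_minus_tangent_half_param:
  fixes \<tau> :: real
  assumes "\<bar>\<tau>\<bar> \<le> 1"
  shows "sqrt (1 - (2 * \<tau> / (1 + \<tau>\<^sup>2))\<^sup>2) = (1 - \<tau>\<^sup>2) / (1 + \<tau>\<^sup>2)"
proof -
  have "1 + \<tau>\<^sup>2 > 0" by (simp add: add_pos_nonneg)
  have "(1 + \<tau>\<^sup>2)\<^sup>2 - (2 * \<tau>)\<^sup>2 = (1 - \<tau>\<^sup>2)\<^sup>2"
    by (simp add: power2_eq_square algebra_simps)
  moreover have "1 - (2 * \<tau> / (1 + \<tau>\<^sup>2))\<^sup>2 = ((1 + \<tau>\<^sup>2)\<^sup>2 - (2 * \<tau>)\<^sup>2) / (1 + \<tau>\<^sup>2)\<^sup>2"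
    using \<open>1 + \<tau>\<^sup>2 > 0\<close> by (simp only: power_divide diff_divide_distrib) simp
  ultimately have "1 - (2 * \<tau> / (1 + \<tau>\<^sup>2))\<^sup>2 = ((1 - \<tau>\<^sup>2) / (1 + \<tau>\<^sup>2))\<^sup>2"
    by (simp only: power_divide)
  moreover have "1 - \<tau>\<^sup>2 \<ge> 0"
    using assms by (simp add: abs_square_le_1)
  ultimately show ?thesis
    using \<open>1 + \<tau>\<^sup>2 > 0\<close> by simp
qed

text \<open>A vanishing weight would make \<open>rho_M f\<close> vanish, since \<open>x / 0 = 0\<close>.\<close>
lemma is_metric_on_rho_M_weight_nonzero:
  assumes "is_metric_on (ball (0::'a::euclidean_space) 1) (rho_M f)" "0 < t" "t < 1"
  shows "f t \<noteq> 0"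
proof
  assume "f t = 0"
  obtain e :: 'a where "norm e = 1"
    using vector_choose_size[of 1] by auto
  then have "t *\<^sub>R e \<in> ball 0 1" "t *\<^sub>R e \<noteq> 0" and "rho_M f (t *\<^sub>R e) 0 = 0"
    using assms(2,3) \<open>f t = 0\<close> by (auto simp: rho_M_def)
  then show False
    using assms(1) unfolding is_metric_on_def by (metis centre_in_ball zero_less_one)
qed

lemma rho_M_sqrt_one_minus_square:
  assumes "\<forall>t\<in>{0..<1}. f t = sqrt (1 - t\<^sup>2)" "x \<in> ball 0 1" "y \<in> ball 0 1"
  shows "rho_M f x y = sqrt ((norm (x - y))\<^sup>2 / ((1 - (norm x)\<^sup>2) * (1 - (norm y)\<^sup>2)))"
  using assms by (simp add: rho_M_def real_sqrt_divide real_sqrt_mult)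

definition GM_ball_invariant :: "('a::euclidean_space \<Rightarrow> 'a \<Rightarrow> real) \<Rightarrow> bool" where
  "GM_ball_invariant d \<longleftrightarrow>
     (\<forall>g\<in>GM_ball. \<forall>x\<in>ball 0 1. \<forall>y\<in>ball 0 1. d (the (g (Some x))) (the (g (Some y))) = d x y)"

lemma GM_ball_invariant_rho_M_sqrt:
  assumes f: "\<forall>t\<in>{0..<1}. f t = sqrt (1 - t\<^sup>2)"
  shows "GM_ball_invariant (rho_M f :: 'a::euclidean_space \<Rightarrow> 'a \<Rightarrow> real)"
  unfolding GM_ball_invariant_def
proof (intro ballI)
  fix g :: "'a option \<Rightarrow> 'a option" and x y :: 'a
  assume "g \<in> GM_ball" "x \<in> ball 0 1" "y \<in> ball 0 1"
  then have g: "lorentz_representable g" "g ` (Some ` ball 0 1) = Some ` ball 0 1"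
    by (simp_all add: GM_ball_def mobius_imp_lorentz_representable)
  with \<open>x \<in> ball 0 1\<close> \<open>y \<in> ball 0 1\<close> obtain x' y' where
    "g (Some x) = Some x'" "x' \<in> ball 0 1" "g (Some y) = Some y'" "y' \<in> ball 0 1"
    by blast
  then show "rho_M f (the (g (Some x))) (the (g (Some y))) = rho_M f x y"
    using ball_preserving_lorentz_representable_invariant[OF g] f \<open>x \<in> ball 0 1\<close> \<open>y \<in> ball 0 1\<close>
    by (simp add: rho_M_sqrt_one_minus_square)
qed

lemma tangent_half_param_bounds:
  fixes \<tau> :: real
  assumes "0 < \<tau>" "\<tau> < 1"
  shows "\<tau> < 2 * \<tau> / (1 + \<tau>\<^sup>2)" "2 * \<tau> / (1 + \<tau>\<^sup>2) < 1"
proof -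
  have "1 + \<tau>\<^sup>2 > 0" by (simp add: add_pos_nonneg)
  have "\<tau>\<^sup>2 < 1" using assms by (simp add: power_less_one_iff)
  then have "\<tau> * (1 + \<tau>\<^sup>2) < 2 * \<tau>"
    using assms(1) by (simp add: algebra_simps)
  then show "\<tau> < 2 * \<tau> / (1 + \<tau>\<^sup>2)"
    using \<open>1 + \<tau>\<^sup>2 > 0\<close> by (simp add: pos_less_divide_eq)
  have "0 < (1 - \<tau>)\<^sup>2"
    using assms(2) by simp
  then show "2 * \<tau> / (1 + \<tau>\<^sup>2) < 1"
    using \<open>1 + \<tau>\<^sup>2 > 0\<close> by (simp add: pos_divide_less_eq power2_diff)
qed

lemma sphere_inversion_tangent_half_param:
  fixes e :: "'a::euclidean_space"
  assumes "norm e = 1" "0 < \<tau>" "\<tau> < 1"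
  defines "g \<equiv> sphere_inversion ((1 / \<tau>) *\<^sub>R e) (sqrt (1 / \<tau>\<^sup>2 - 1))"
  shows "g \<in> GM_ball" "g (Some (\<tau> *\<^sub>R e)) = Some 0"
    "g (Some ((2 * \<tau> / (1 + \<tau>\<^sup>2)) *\<^sub>R e)) = Some ((- \<tau>) *\<^sub>R e)"
proof -
  define r where "r = sqrt (1 / \<tau>\<^sup>2 - 1)"
  have "1 + \<tau>\<^sup>2 > 0" by (simp add: add_pos_nonneg)
  have "\<tau>\<^sup>2 < 1" using assms(2,3) by (simp add: power_less_one_iff)
  then have "1 < 1 / \<tau>\<^sup>2"
    using assms(2) by (simp add: field_simps)
  then have r2: "r\<^sup>2 = 1 / \<tau>\<^sup>2 - 1" and "r > 0"
    by (simp_all add: r_def)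
  show "g \<in> GM_ball"
    unfolding g_def r_def[symmetric] using \<open>r > 0\<close> r2 assms(1,2)
    by (intro sphere_inversion_orthogonal_GM_ball) (simp_all add: power_divide)
  have "1 < 1 / \<tau>"
    using assms(2,3) by simp
  then have "\<tau> \<noteq> 1 / \<tau>" "2 * \<tau> / (1 + \<tau>\<^sup>2) \<noteq> 1 / \<tau>"
    using assms(3) tangent_half_param_bounds[OF assms(2,3)] by linarith+
  moreover have "1 / \<tau> + r\<^sup>2 / (\<tau> - 1 / \<tau>) = 0"
    using assms(2) \<open>\<tau>\<^sup>2 < 1\<close> unfolding r2 by (simp add: field_simps power2_eq_square)
  moreover have "1 / \<tau> + r\<^sup>2 / (2 * \<tau> / (1 + \<tau>\<^sup>2) - 1 / \<tau>) = - \<tau>"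
    using assms(2) \<open>\<tau>\<^sup>2 < 1\<close> \<open>1 + \<tau>\<^sup>2 > 0\<close> unfolding r2 by (simp add: field_simps power2_eq_square)
  ultimately show "g (Some (\<tau> *\<^sub>R e)) = Some 0"
    "g (Some ((2 * \<tau> / (1 + \<tau>\<^sup>2)) *\<^sub>R e)) = Some ((- \<tau>) *\<^sub>R e)"
    using sphere_inversion_on_line[OF assms(1)] by (simp_all add: g_def r_def[symmetric])
qed

lemma GM_ball_invariant_rho_M_tangent_half_param:
  assumes "GM_ball_invariant (rho_M f :: 'a::euclidean_space \<Rightarrow> 'a \<Rightarrow> real)"
    and "f 0 = 1" "0 < \<tau>" "\<tau> < 1" "f \<tau> \<noteq> 0" "f (2 * \<tau> / (1 + \<tau>\<^sup>2)) \<noteq> 0"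
  shows "f (2 * \<tau> / (1 + \<tau>\<^sup>2)) = (1 - \<tau>\<^sup>2) / (1 + \<tau>\<^sup>2)"
proof -
  define s where "s = 2 * \<tau> / (1 + \<tau>\<^sup>2)"
  have "\<tau> < s" "s < 1" "f s \<noteq> 0"
    using tangent_half_param_bounds[OF assms(3,4)] assms(6) by (simp_all add: s_def)
  obtain e :: 'a where "norm e = 1"
    using vector_choose_size[of 1] by auto
  then obtain g where "g \<in> GM_ball" "g (Some (\<tau> *\<^sub>R e)) = Some 0" "g (Some (s *\<^sub>R e)) = Some ((- \<tau>) *\<^sub>R e)"
    using sphere_inversion_tangent_half_param[OF _ assms(3,4)] unfolding s_def by blast
  moreover have "\<tau> *\<^sub>R e \<in> ball 0 1" "s *\<^sub>R e \<in> ball 0 1"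
    using assms(3) \<open>\<tau> < s\<close> \<open>s < 1\<close> \<open>norm e = 1\<close> by simp_all
  ultimately have "rho_M f 0 ((- \<tau>) *\<^sub>R e) = rho_M f (\<tau> *\<^sub>R e) (s *\<^sub>R e)"
    using assms(1) unfolding GM_ball_invariant_def by (metis option.sel)
  moreover have "norm (\<tau> *\<^sub>R e - s *\<^sub>R e) = s - \<tau>"
    using \<open>\<tau> < s\<close> \<open>norm e = 1\<close> by (simp add: scaleR_diff_left[symmetric])
  ultimately have "\<tau> / f \<tau> = (s - \<tau>) / (f \<tau> * f s)"
    using assms(2,3) \<open>\<tau> < s\<close> \<open>norm e = 1\<close> by (simp add: rho_M_def)
  then have "\<tau> * f s = s - \<tau>"
    using assms(5) \<open>f s \<noteq> 0\<close> by (simp add: field_simps)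
  then have "f s = s / \<tau> - 1"
    using assms(3) by (simp add: field_simps)
  also have "\<dots> = 2 / (1 + \<tau>\<^sup>2) - 1"
    using assms(3) by (simp add: s_def)
  also have "\<dots> = (1 - \<tau>\<^sup>2) / (1 + \<tau>\<^sup>2)"
    using add_pos_nonneg[of 1 "\<tau>\<^sup>2"] by (simp add: field_simps)
  finally show ?thesis unfolding s_def .
qed

lemma GM_ball_invariant_rho_M_imp_sqrt:
  assumes "GM_ball_invariant (rho_M f :: 'a::euclidean_space \<Rightarrow> 'a \<Rightarrow> real)"
    and "f 0 = 1" and "is_metric_on (ball (0::'a) 1) (rho_M f)"
  shows "\<forall>t\<in>{0..<1}. f t = sqrt (1 - t\<^sup>2)"
proof
  fix s :: real assume "s \<in> {0..<1}"
  show "f s = sqrt (1 - s\<^sup>2)"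
  proof (cases "s = 0")
    case False
    with \<open>s \<in> {0..<1}\<close> have "0 < s" "s < 1" by auto
    then obtain \<tau> where "0 < \<tau>" "\<tau> < 1" and s: "s = 2 * \<tau> / (1 + \<tau>\<^sup>2)"
      by (rule ex_tangent_half_param)
    have "f \<tau> \<noteq> 0" "f s \<noteq> 0"
      using is_metric_on_rho_M_weight_nonzero[OF assms(3)] \<open>0 < s\<close> \<open>s < 1\<close> \<open>0 < \<tau>\<close> \<open>\<tau> < 1\<close> by auto
    then show ?thesis
      using GM_ball_invariant_rho_M_tangent_half_param[OF assms(1,2) \<open>0 < \<tau>\<close> \<open>\<tau> < 1\<close>, folded s]
        sqrt_one_minus_tangent_half_param[of \<tau>, folded s] \<open>0 < \<tau>\<close> \<open>\<tau> < 1\<close>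
      by simp
  qed (simp add: assms(2))
qed

theorem lemma6p2:
  fixes f :: "real \<Rightarrow> real"
  assumes "\<forall>t\<in>{0..<1}. f t \<ge> 0"
    and "f 0 = 1"
    and "is_metric_on (ball (0::'a::euclidean_space) 1) (rho_M f)"
  shows "(\<forall>g\<in>(GM_ball :: ('a option \<Rightarrow> 'a option) set). \<forall>x\<in>ball 0 1. \<forall>y\<in>ball 0 1.
            rho_M f (the (g (Some x))) (the (g (Some y))) = rho_M f x y)
         \<longleftrightarrow> (\<forall>t\<in>{0..<1}. f t = sqrt (1 - t\<^sup>2))"
proof -
  have "GM_ball_invariant (rho_M f :: 'a \<Rightarrow> 'a \<Rightarrow> real) \<longleftrightarrow> (\<forall>t\<in>{0..<1}. f t = sqrt (1 - t\<^sup>2))"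
    using GM_ball_invariant_rho_M_imp_sqrt[OF _ assms(2,3)] GM_ball_invariant_rho_M_sqrt by blast
  then show ?thesis
    unfolding GM_ball_invariant_def .
qed

end
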